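(* Let $\Gamma$ be a $(c,t)$-sparse graph and let $0<\gamma<1$. Suppose $\pi_1$ and $\pi_2$ are probability measures on $V(\Gamma)$ such that $\pi_i(v)<\gamma/t$ for all $v\in V(\Gamma)$ and $i\in\{1,2\}$. Let $\mathcal{S}=\{S_v: v\in\mathrm{supp}(\pi_2)\}$ be a family of subsets of $V(\Gamma)$, each of size $|S_v|\ge t$. Let $$D(\pi_2,\mathcal{S})=\{x\in V(\Gamma): \pi_2(\{y\in V(\Gamma): |S_y\setminus N_\Gamma(x)|<c|S_y|\})<\sqrt{\gamma}\}.$$ Then $\Pr_{x\sim\pi_1}[x\in D(\pi_2,\mathcal{S})]>1-\sqrt{\gamma}$.
   Context: A graph $\Gamma$ is $(c,t)$-sparse if for every pair of (not necessarily disjoint) vertex subsets $A,B\subseteq V(\Gamma)$ with $|A|,|B|\ge t$ we have $e(A,B)\le (1-c)|A||B|$, where $e(A,B)$ counts ordered pairs $(a,b)\in A\times B$ with $\{a,b\}\in E(\Gamma)$. *)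

theory Defs
  imports Complex_Main
begin

definition simple_graph :: "'a set \<Rightarrow> ('a \<Rightarrow> 'a \<Rightarrow> bool) \<Rightarrow> bool" where
  "simple_graph V E \<longleftrightarrow> finite V \<and> (\<forall>x\<in>V. \<forall>y\<in>V. E x y \<longrightarrow> E y x) \<and> (\<forall>x\<in>V. \<not> E x x)"

definition edges_between :: "('a \<Rightarrow> 'a \<Rightarrow> bool) \<Rightarrow> 'a set \<Rightarrow> 'a set \<Rightarrow> nat" where
  "edges_between E A B = card {(a, b) \<in> A \<times> B. E a b}"

definition sparse :: "'a set \<Rightarrow> ('a \<Rightarrow> 'a \<Rightarrow> bool) \<Rightarrow> real \<Rightarrow> real \<Rightarrow> bool" where
  "sparse V E c t \<longleftrightarrow>
     (\<forall>A B. A \<subseteq> V \<longrightarrow> B \<subseteq> V \<longrightarrow> real (card A) \<ge> t \<longrightarrow> real (card B) \<ge> t \<longrightarrow>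
        real (edges_between E A B) \<le> (1 - c) * real (card A) * real (card B))"

definition nbhd :: "'a set \<Rightarrow> ('a \<Rightarrow> 'a \<Rightarrow> bool) \<Rightarrow> 'a \<Rightarrow> 'a set" where
  "nbhd V E x = {y \<in> V. E x y}"

definition prob_dist :: "'a set \<Rightarrow> ('a \<Rightarrow> real) \<Rightarrow> bool" where
  "prob_dist V \<pi> \<longleftrightarrow> (\<forall>v\<in>V. \<pi> v \<ge> 0) \<and> sum \<pi> V = 1"

definition supp :: "'a set \<Rightarrow> ('a \<Rightarrow> real) \<Rightarrow> 'a set" where
  "supp V \<pi> = {v \<in> V. \<pi> v > 0}"

definition D_set :: "'a set \<Rightarrow> ('a \<Rightarrow> 'a \<Rightarrow> bool) \<Rightarrow> real \<Rightarrow> real \<Rightarrow> ('a \<Rightarrow> real) \<Rightarrow> ('a \<Rightarrow> 'a set) \<Rightarrow> 'a set" where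
  "D_set V E c \<gamma> \<pi>2 S =
     {x \<in> V. sum \<pi>2 {y \<in> V. real (card (S y - nbhd V E x)) < c * real (card (S y))} < sqrt \<gamma>}"

end

theory Submission
  imports Defs
begin

text \<open>Suppose the vertices outside D carry \<pi>1-mass at least sqrt \<gamma>. Each such x sees a set Y x
  of \<pi>2-mass at least sqrt \<gamma> of vertices y whose S y lies mostly in the neighbourhood of x.
  Double counting the pairs (x, y) with y \<in> Y x weighted by \<pi>1 x \<pi>2 y gives total weight at least \<gamma>,
  so some y in the support of \<pi>2 is in Y x for a set A of x of \<pi>1-mass at least \<gamma>. Since every
  point mass is below \<gamma>/t, |A| \<ge> t, and every vertex of A is adjacent to more than a (1 - c)-fraction
  of S y, so e(A, S y) > (1 - c)|A||S y|, contradicting sparsity.\<close>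

lemma card_ge_if_mass_ge:
  fixes p :: "'a \<Rightarrow> real"
  assumes "finite A" and "\<forall>x\<in>A. p x \<le> \<gamma> / t" and "\<gamma> \<le> sum p A" and "0 < \<gamma>"
  shows "t \<le> real (card A)"
proof (cases "t \<le> 0")
  case False
  have "\<gamma> \<le> real (card A) * (\<gamma> / t)"
    using assms(3) sum_bounded_above[of A p "\<gamma> / t"] assms(2) by auto
  then show ?thesis
    using False \<open>0 < \<gamma>\<close> by (simp add: field_simps)
qed (use of_nat_0_le_iff order_trans in blast)

lemma prob_dist_exists_supp_ge_expectation:
  assumes "prob_dist V \<pi>" and "finite V" and "a \<le> (\<Sum>y\<in>V. \<pi> y * f y)"
  shows "\<exists>y\<in>supp V \<pi>. a \<le> f y"
proof (rule ccontr)
  assume "\<not> ?thesis"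
  then have below: "\<forall>y\<in>supp V \<pi>. f y < a" by auto
  have nonneg: "\<forall>y\<in>V. 0 \<le> \<pi> y" and total: "sum \<pi> V = 1"
    using assms(1) by (auto simp: prob_dist_def)
  have supp_fin: "finite (supp V \<pi>)" and supp_sub: "supp V \<pi> \<subseteq> V"
    using assms(2) by (auto simp: supp_def)
  have off_supp: "\<forall>y\<in>V - supp V \<pi>. \<pi> y = 0"
    using nonneg by (force simp: supp_def)
  then have "supp V \<pi> \<noteq> {}"
    using total by (metis Diff_empty sum.neutral zero_neq_one)
  have "(\<Sum>y\<in>V. \<pi> y * f y) = (\<Sum>y\<in>supp V \<pi>. \<pi> y * f y)"
    using off_supp by (intro sum.mono_neutral_right[OF assms(2) supp_sub]) auto
  also have "\<dots> < (\<Sum>y\<in>supp V \<pi>. \<pi> y * a)"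
    using below \<open>supp V \<pi> \<noteq> {}\<close> supp_fin by (intro sum_strict_mono) (auto simp: supp_def)
  also have "\<dots> = (\<Sum>y\<in>V. \<pi> y * a)"
    using off_supp by (intro sum.mono_neutral_left[OF assms(2) supp_sub]) auto
  also have "\<dots> = a"
    using total by (simp add: sum_distrib_right[symmetric])
  finally show False
    using assms(3) by simp
qed

lemma sum_weighted_relation_swap:
  fixes p q :: "'a \<Rightarrow> 'b :: comm_semiring_1"
  assumes "finite X" and "finite Y"
  shows "(\<Sum>x\<in>X. p x * sum q {y\<in>Y. R x y}) = (\<Sum>y\<in>Y. q y * sum p {x\<in>X. R x y})"
proof -
  have "(\<Sum>x\<in>X. p x * sum q {y\<in>Y. R x y}) = (\<Sum>x\<in>X. \<Sum>y\<in>Y. if R x y then p x * q y else 0)"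
    using assms(2) by (auto simp: sum_distrib_left sum.inter_filter intro!: sum.cong)
  also have "\<dots> = (\<Sum>y\<in>Y. \<Sum>x\<in>X. if R x y then p x * q y else 0)"
    by (rule sum.swap)
  also have "\<dots> = (\<Sum>y\<in>Y. q y * sum p {x\<in>X. R x y})"
    using assms(1) by (auto simp: sum_distrib_left sum.inter_filter mult.commute intro!: sum.cong)
  finally show ?thesis .
qed

lemma sum_weighted_ge_mult:
  fixes p f :: "'a \<Rightarrow> real"
  assumes "\<forall>x\<in>B. 0 \<le> p x \<and> a \<le> f x" and "b \<le> sum p B" and "0 \<le> a"
  shows "b * a \<le> (\<Sum>x\<in>B. p x * f x)"
proof -
  have "b * a \<le> sum p B * a"
    using assms(2,3) by (rule mult_right_mono)
  also have "\<dots> = (\<Sum>x\<in>B. p x * a)"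
    by (simp add: sum_distrib_right)
  also have "\<dots> \<le> (\<Sum>x\<in>B. p x * f x)"
    using assms(1) by (intro sum_mono mult_left_mono) auto
  finally show ?thesis .
qed

lemma edges_between_eq_sum_card_nbhd:
  assumes "finite A" and "finite S" and "S \<subseteq> V"
  shows "edges_between E A S = (\<Sum>a\<in>A. card (S \<inter> nbhd V E a))"
proof -
  have "{(a, b) \<in> A \<times> S. E a b} = Sigma A (\<lambda>a. S \<inter> nbhd V E a)"
    using assms(3) by (auto simp: nbhd_def)
  then show ?thesis
    unfolding edges_between_def using assms(1,2) by (simp add: card_SigmaI)
qed

lemma sparse_exists_many_non_neighbours:
  assumes "sparse V E c t" and "finite V"
    and "A \<subseteq> V" and "A \<noteq> {}" and "S \<subseteq> V"
    and "t \<le> real (card A)" and "t \<le> real (card S)"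
  shows "\<exists>x\<in>A. c * real (card S) \<le> real (card (S - nbhd V E x))"
proof (rule ccontr)
  assume "\<not> ?thesis"
  then have few: "\<forall>x\<in>A. real (card (S - nbhd V E x)) < c * real (card S)"
    by (simp add: not_le)
  have finA: "finite A" and finS: "finite S"
    using assms(2,3,5) finite_subset by auto
  have "(1 - c) * real (card A) * real (card S) = (\<Sum>x\<in>A. (1 - c) * real (card S))"
    by simp
  also have "\<dots> < (\<Sum>x\<in>A. real (card (S \<inter> nbhd V E x)))"
  proof (rule sum_strict_mono[OF finA assms(4)])
    fix x assume "x \<in> A"
    have "card S = card (S \<inter> nbhd V E x) + card (S - nbhd V E x)"
      using finS by (rule card_Int_Diff)
    then show "(1 - c) * real (card S) < real (card (S \<inter> nbhd V E x))"
      using few \<open>x \<in> A\<close> by (simp add: algebra_simps)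
  qed
  also have "\<dots> = real (edges_between E A S)"
    using edges_between_eq_sum_card_nbhd[OF finA finS assms(5)] by simp
  also have "\<dots> \<le> (1 - c) * real (card A) * real (card S)"
    using assms(1,3,5,6,7) unfolding sparse_def by blast
  finally show False
    by simp
qed

theorem lemma4p2:
  fixes V :: "'a set" and E :: "'a \<Rightarrow> 'a \<Rightarrow> bool"
    and c t \<gamma> :: real and \<pi>1 \<pi>2 :: "'a \<Rightarrow> real" and S :: "'a \<Rightarrow> 'a set"
  assumes "simple_graph V E"
    and "sparse V E c t"
    and "0 < \<gamma>" and "\<gamma> < 1"
    and "prob_dist V \<pi>1" and "prob_dist V \<pi>2"
    and "\<forall>v\<in>V. \<pi>1 v < \<gamma> / t" and "\<forall>v\<in>V. \<pi>2 v < \<gamma> / t"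
    and "\<forall>v\<in>supp V \<pi>2. S v \<subseteq> V \<and> real (card (S v)) \<ge> t"
  shows "sum \<pi>1 (D_set V E c \<gamma> \<pi>2 S) > 1 - sqrt \<gamma>"
proof (rule ccontr)
  assume small_D: "\<not> ?thesis"
  have finV: "finite V" and \<pi>1_nonneg: "\<forall>v\<in>V. 0 \<le> \<pi>1 v"
    using assms(1,5) by (auto simp: simple_graph_def prob_dist_def)
  define R where "R x y \<longleftrightarrow> real (card (S y - nbhd V E x)) < c * real (card (S y))" for x y
  define B where "B = V - D_set V E c \<gamma> \<pi>2 S"
  define A where "A y = {x\<in>B. R x y}" for y
  have "sum \<pi>1 V = sum \<pi>1 B + sum \<pi>1 (D_set V E c \<gamma> \<pi>2 S)"
    unfolding B_def using finV by (intro sum.subset_diff) (auto simp: D_set_def)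
  then have "sqrt \<gamma> \<le> sum \<pi>1 B"
    using small_D assms(5) by (simp add: prob_dist_def)
  moreover have "\<forall>x\<in>B. 0 \<le> \<pi>1 x \<and> sqrt \<gamma> \<le> sum \<pi>2 {y\<in>V. R x y}"
    using \<pi>1_nonneg by (auto simp: B_def D_set_def R_def not_less)
  ultimately have "sqrt \<gamma> * sqrt \<gamma> \<le> (\<Sum>x\<in>B. \<pi>1 x * sum \<pi>2 {y\<in>V. R x y})"
    using assms(3) by (intro sum_weighted_ge_mult) auto
  also have "\<dots> = (\<Sum>y\<in>V. \<pi>2 y * sum \<pi>1 (A y))"
    unfolding A_def using finV by (intro sum_weighted_relation_swap) (auto simp: B_def)
  finally have "\<gamma> \<le> (\<Sum>y\<in>V. \<pi>2 y * sum \<pi>1 (A y))"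
    using assms(3) by simp
  then obtain y where y: "y \<in> supp V \<pi>2" and mass: "\<gamma> \<le> sum \<pi>1 (A y)"
    using prob_dist_exists_supp_ge_expectation[OF assms(6) finV, where f = "\<lambda>y. sum \<pi>1 (A y)"]
    by blast
  have AV: "A y \<subseteq> V"
    by (auto simp: A_def B_def)
  have "t \<le> real (card (A y))"
    using card_ge_if_mass_ge[OF _ _ mass assms(3)] AV assms(7) finV finite_subset
    by (meson less_imp_le subsetD)
  moreover have "A y \<noteq> {}"
    using mass assms(3) by auto
  ultimately obtain x where "x \<in> A y" and "c * real (card (S y)) \<le> real (card (S y - nbhd V E x))"
    using sparse_exists_many_non_neighbours[OF assms(2) finV AV] y assms(9) by blast
  then show False
    by (simp add: A_def R_def)
qed

end
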